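(* Let $\mathcal F=(F,\rightarrowtail)$ be an argumentation framework with grounded extension $\mathcal G$. If $A\subseteq F$ is tenable, then $A\cup\mathcal G$ is conflict-free.
   Context: An argumentation framework (AF) $\mathcal F=(F,\rightarrowtail)$ consists of a (possibly infinite) set $F$ of arguments and a binary attack relation $\rightarrowtail\subseteq F\times F$. An argument $a$ attacks a set $B$ if $a\rightarrowtail b$ for some $b\in B$; a set $A$ attacks $x$ if some $a\in A$ attacks $x$. $A^+=\{x\in F:\exists a\in A,\ a\rightarrowtail x\}$. A set is conflict-free if none of its elements attacks one of its elements. For $A,B\subseteq F$, $A$ is as cogent as $B$, written $A\succeq B$, if $A$ is conflict-free and every $b\in B$ that attacks $A$ belongs to $A^+$. We write $B\succ A$ if $B\succeq A$ and not $A\succeq B$. Grounded extension: a set $S$ defends an argument $a$ if every attacker of $a$ is attacked by some element of $S$. Put $\mathcal G_0=\emptyset$, $\mathcal G_{\alpha+1}=\{a\in F: \mathcal G_\alpha \text{ defends } a\}$ for ordinals $\alpha$, and $\mathcal G_\lambda=\bigcup_{\alpha<\lambda}\mathcal G_\alpha$ for limit ordinals $\lambda$. There is an ordinal $\beta$ with $\mathcal G_\gamma=\mathcal G_\beta$ for all $\gamma\ge\beta$; the grounded extension is $\mathcal G=\mathcal G_\beta$. Tenability game: a tenability dispute on $\mathcal F$ is a finite sequence $(X_0,\dots,X_n)$ of subsets of $F$, where even-indexed sets are moves of the Proponent (Pro) and odd-indexed sets are moves of the Opponent (Opp), such that (1) each $X_i$ is conflict-free; (2) $X_i\subseteq X_{i+2}$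 whenever both are defined; (3) $X_1$ and each $X_{i+2}\setminus X_i$ are finite; (4) $X_{i+1}\succeq X_i$ for every $i$; (5) every Opp move satisfies $X_{2k+1}\succ X_{2k}$. Play starts with $X_0=A$ and players alternately extend the sequence so that it remains a tenability dispute. A dispute is concluded if it has no legal extension; a concluded dispute is won by the player who made its last move. A strategy for Pro assigns to each dispute ending with an Opp move a legal Pro reply; it is winning if every concluded dispute starting with $X_0=A$ in which Pro follows it is won by Pro (infinite plays count as wins for Pro). $A$ is tenable if Pro has a winning strategy starting with $X_0=A$. *)

theory Defs
  imports Main
begin

text \<open>An argumentation framework is given by a carrier set F of arguments and an
attack relation att (att a b means a attacks b), with att contained in F x F.\<close>

definition conflict_free :: "('a \<Rightarrow> 'a \<Rightarrow> bool) \<Rightarrow> 'a set \<Rightarrow> bool" where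
  "conflict_free att A \<longleftrightarrow> (\<forall>a\<in>A. \<forall>b\<in>A. \<not> att a b)"

definition attacked_by :: "('a \<Rightarrow> 'a \<Rightarrow> bool) \<Rightarrow> 'a set \<Rightarrow> 'a set" where
  "attacked_by att A = {x. \<exists>a\<in>A. att a x}"

definition cogent :: "('a \<Rightarrow> 'a \<Rightarrow> bool) \<Rightarrow> 'a set \<Rightarrow> 'a set \<Rightarrow> bool" where
  "cogent att A B \<longleftrightarrow> conflict_free att A \<and>
     (\<forall>b\<in>B. (\<exists>a\<in>A. att b a) \<longrightarrow> b \<in> attacked_by att A)"

definition strictly_cogent :: "('a \<Rightarrow> 'a \<Rightarrow> bool) \<Rightarrow> 'a set \<Rightarrow> 'a set \<Rightarrow> bool" where
  "strictly_cogent att B A \<longleftrightarrow> cogent att B A \<and> \<not> cogent att A B"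

definition defends :: "('a \<Rightarrow> 'a \<Rightarrow> bool) \<Rightarrow> 'a set \<Rightarrow> 'a \<Rightarrow> bool" where
  "defends att S a \<longleftrightarrow> (\<forall>b. att b a \<longrightarrow> (\<exists>c\<in>S. att c b))"

text \<open>Grounded extension: union of the transfinite stages G_alpha, i.e. the least set
closed under adding the arguments it defends.\<close>
inductive_set grounded :: "'a set \<Rightarrow> ('a \<Rightarrow> 'a \<Rightarrow> bool) \<Rightarrow> 'a set"
  for F :: "'a set" and att :: "'a \<Rightarrow> 'a \<Rightarrow> bool" where
  "a \<in> F \<Longrightarrow> (\<forall>b. att b a \<longrightarrow> (\<exists>c. c \<in> grounded F att \<and> att c b)) \<Longrightarrow> a \<in> grounded F att"

text \<open>Tenability disputes as lists [X_0, ..., X_n]; even indices are Pro moves.\<close>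
definition dispute :: "'a set \<Rightarrow> ('a \<Rightarrow> 'a \<Rightarrow> bool) \<Rightarrow> 'a set list \<Rightarrow> bool" where
  "dispute F att d \<longleftrightarrow> d \<noteq> [] \<and>
     (\<forall>i<length d. d!i \<subseteq> F \<and> conflict_free att (d!i)) \<and>
     (\<forall>i. i + 2 < length d \<longrightarrow> d!i \<subseteq> d!(i+2)) \<and>
     (1 < length d \<longrightarrow> finite (d!1)) \<and>
     (\<forall>i. i + 2 < length d \<longrightarrow> finite (d!(i+2) - d!i)) \<and>
     (\<forall>i. i + 1 < length d \<longrightarrow> cogent att (d!(i+1)) (d!i)) \<and>
     (\<forall>k. 2*k + 1 < length d \<longrightarrow> strictly_cogent att (d!(2*k+1)) (d!(2*k)))"

definition follows :: "('a set list \<Rightarrow> 'a set) \<Rightarrow> 'a set list \<Rightarrow> bool" where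
  "follows \<sigma> d \<longleftrightarrow> (\<forall>k. 0 < k \<and> 2*k < length d \<longrightarrow> d!(2*k) = \<sigma> (take (2*k) d))"

text \<open>A Pro strategy is winning from A if, in every dispute starting with A that follows it
and ends with an Opp move, its answer is a legal reply. Then every concluded dispute
following it ends with a Pro move (Pro wins), and infinite plays are Pro wins.\<close>
definition tenable :: "'a set \<Rightarrow> ('a \<Rightarrow> 'a \<Rightarrow> bool) \<Rightarrow> 'a set \<Rightarrow> bool" where
  "tenable F att A \<longleftrightarrow> dispute F att [A] \<and>
     (\<exists>\<sigma>. \<forall>d. dispute F att d \<and> hd d = A \<and> follows \<sigma> d \<and> even (length d)
          \<longrightarrow> dispute F att (d @ [\<sigma> d]))"

end

theory Submission
  imports Defs
begin

text \<open>
  The grounded extension is the least fixpoint of the defence operator, and its transfinite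
  iteration ranks the grounded arguments well-foundedly: every attacker of a grounded argument
  is counterattacked by a grounded argument of strictly smaller rank.

  Suppose a grounded argument attacks the tenable set A, and let g0 be such an attacker of
  minimal rank. Then A attacks nothing of rank at most g0, so Opp may open with {g0}. Whenever
  an argument l of Opp's last move attacks Pro's reply X, Pro must have counterattacked l, and
  Opp answers by closing its move under chosen lower-ranked defenders against the arguments
  of X outside A. The rules of a dispute allow only finitely many of them, so this closure Z
  is finite (a Koenig-type argument along the ranks). Z is as cogent as X, and an element of Z of minimal
  rank attacking X is not attacked by X, so the move is strictly more cogent and again
  attacks Pro's next reply, now with an argument of smaller rank. Well-foundedness ends this
  descent, contradicting that the strategy always provides a legal reply. Finally A does not
  attack the grounded extension either, since the grounded extension would have to attack A
  back.
\<close>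

section \<open>Transfinite iteration of a monotone operator\<close>

lemma iterates_tower_if_successors_below:
  fixes f :: "'a::ccpo \<Rightarrow> 'a"
  assumes f: "mono f" and x: "x \<in> ccpo_class.iterates f"
    and below: "\<And>y. y \<in> ccpo_class.iterates f \<Longrightarrow> y < x \<Longrightarrow> f y \<le> x"
  shows "y \<in> ccpo_class.iterates f \<Longrightarrow> y \<le> x \<or> f x \<le> y"
proof (induction y rule: ccpo_class.iterates.induct)
  case (step y)
  have "y \<le> f y" using step.hyps f by (rule iterates_le_f)
  with step below show ?case by (auto simp: order.order_iff_strict intro: order_trans)
next
  case (Sup M)
  show ?case
  proof (cases "\<exists>y\<in>M. f x \<le> y")
    case True
    then show ?thesis using Sup.hyps(1) by (blast intro: ccpo_Sup_upper order_trans)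
  next
    case False
    then have "y \<le> x" if "y \<in> M" for y using Sup.IH that by blast
    then show ?thesis using Sup.hyps(1) by (blast intro: ccpo_Sup_least)
  qed
qed

lemma iterates_tower:
  fixes f :: "'a::ccpo \<Rightarrow> 'a"
  assumes f: "mono f" and x: "x \<in> ccpo_class.iterates f" and y: "y \<in> ccpo_class.iterates f"
  shows "y \<le> x \<or> f x \<le> y"
proof -
  have "\<forall>y\<in>ccpo_class.iterates f. y < x \<longrightarrow> f y \<le> x" using x
  proof (induction x rule: ccpo_class.iterates.induct)
    case (step x)
    show ?case
    proof (intro ballI impI)
      fix y assume y: "y \<in> ccpo_class.iterates f" "y < f x"
      have "y \<le> x \<or> f x \<le> y" using iterates_tower_if_successors_below[OF f step.hyps _ y(1)] step.IH by blast
      then have "y \<le> x" using y(2) by (metis order_le_less_trans less_irrefl)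
      with f show "f y \<le> f x" by (rule monoD)
    qed
  next
    case (Sup M)
    show ?case
    proof (intro ballI impI)
      fix y assume y: "y \<in> ccpo_class.iterates f" "y < Sup M"
      show "f y \<le> Sup M"
      proof (cases "\<exists>z\<in>M. y < z")
        case True
        then obtain z where "z \<in> M" "y < z" by blast
        then have "f y \<le> z" "z \<le> Sup M" using Sup y(1) by (blast intro: ccpo_Sup_upper)+
        then show ?thesis by (rule order_trans)
      next
        case False
        have "z \<le> y" if z: "z \<in> M" for z
        proof -
          have "y \<le> z \<or> f z \<le> y" using iterates_tower_if_successors_below[OF f _ _ y(1), of z] Sup.IH z by blast
          moreover have "z \<le> f z" using Sup.IH z f by (blast intro: iterates_le_f)
          ultimately show "z \<le> y" using False z by (metis order.order_iff_strict order_trans)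
        qed
        then have "Sup M \<le> y" by (rule ccpo_Sup_least[OF Sup.hyps])
        with y(2) show ?thesis by simp
      qed
    qed
  qed
  then show ?thesis using iterates_tower_if_successors_below[OF f x _ y] by blast
qed

lemma iterates_le_fixp:
  fixes f :: "'a::ccpo \<Rightarrow> 'a"
  assumes "mono f" "x \<in> ccpo_class.iterates f"
  shows "x \<le> ccpo_class.fixp f"
  using assms unfolding ccpo_class.fixp_def by (blast intro: ccpo_Sup_upper chain_iterates)

text \<open>For the defence operator, the stages in ccpo_class.iterates are the sets G_alpha of the
  paper.\<close>

definition precedes :: "('a set \<Rightarrow> 'a set) \<Rightarrow> ('a \<times> 'a) set" where
  "precedes f = {(c, h). \<exists>S\<in>ccpo_class.iterates f. c \<in> S \<and> h \<notin> S}"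

lemma iterates_entry_stage:
  fixes f :: "'a set \<Rightarrow> 'a set"
  assumes f: "mono f" and meets: "Q \<inter> ccpo_class.fixp f \<noteq> {}"
  obtains S where "S \<in> ccpo_class.iterates f" "S \<inter> Q = {}" "f S \<inter> Q \<noteq> {}"
proof -
  let ?S = "\<Union>{S \<in> ccpo_class.iterates f. S \<inter> Q = {}}"
  have "Complete_Partial_Order.chain (\<subseteq>) {S \<in> ccpo_class.iterates f. S \<inter> Q = {}}"
    using chain_iterates[OF f] by (rule chain_subset) blast
  then have S: "?S \<in> ccpo_class.iterates f" by (blast intro: ccpo_class.iterates.Sup)
  moreover have "f ?S \<inter> Q \<noteq> {}"
  proof
    assume "f ?S \<inter> Q = {}"
    then have "f ?S \<subseteq> ?S" using ccpo_class.iterates.step[OF S] by blast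
    then have "ccpo_class.fixp f \<subseteq> ?S" by (rule fixp_lowerbound[OF f])
    with meets show False by blast
  qed
  ultimately show thesis using that by blast
qed

lemma precedes_fst_in_fixp: "mono f \<Longrightarrow> (c, h) \<in> precedes f \<Longrightarrow> c \<in> ccpo_class.fixp f"
  unfolding precedes_def by (blast dest: iterates_le_fixp)

lemma trans_precedes:
  fixes f :: "'a set \<Rightarrow> 'a set"
  assumes f: "mono f" shows "trans (precedes f)"
proof (rule transI)
  fix x y z assume "(x, y) \<in> precedes f" "(y, z) \<in> precedes f"
  then obtain S T where S: "S \<in> ccpo_class.iterates f" "x \<in> S" "y \<notin> S"
    and T: "T \<in> ccpo_class.iterates f" "y \<in> T" "z \<notin> T"
    unfolding precedes_def by blast
  have "S \<subseteq> T \<or> T \<subseteq> S" using chain_iterates[OF f] S(1) T(1) by (auto dest: chainD)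
  with S T show "(x, z) \<in> precedes f" unfolding precedes_def by blast
qed

lemma wf_precedes:
  fixes f :: "'a set \<Rightarrow> 'a set"
  assumes f: "mono f" shows "wf (precedes f)"
proof (rule wfI_min)
  fix x :: 'a and Q assume x: "x \<in> Q"
  show "\<exists>q\<in>Q. \<forall>y. (y, q) \<in> precedes f \<longrightarrow> y \<notin> Q"
  proof (cases "Q \<inter> ccpo_class.fixp f = {}")
    case True
    then show ?thesis using x precedes_fst_in_fixp[OF f] by blast
  next
    case False
    then obtain S q where S: "S \<in> ccpo_class.iterates f" "S \<inter> Q = {}" and q: "q \<in> f S" "q \<in> Q"
      using iterates_entry_stage[OF f] by blast
    have "y \<notin> Q" if yq: "(y, q) \<in> precedes f" for y
    proof -
      obtain T where T: "T \<in> ccpo_class.iterates f" "y \<in> T" "q \<notin> T"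
        using yq unfolding precedes_def by blast
      then have "T \<subseteq> S" using iterates_tower[OF f S(1) T(1)] q(1) by blast
      with T(2) S(2) show "y \<notin> Q" by blast
    qed
    with q(2) show ?thesis by blast
  qed
qed

lemma finite_rtrancl_Image_if_wf:
  assumes wf: "wf R" and dec: "converse S \<subseteq> R" and branch: "\<And>z. finite (S `` {z})"
    and Y: "finite Y"
  shows "finite (S\<^sup>* `` Y)"
proof -
  have "finite (S\<^sup>* `` {y})" for y
    using wf
  proof (induction y rule: wf_induct_rule)
    case (less y)
    have "S\<^sup>* `` {y} = insert y (\<Union>z\<in>S `` {y}. S\<^sup>* `` {z})"
      by (auto elim: converse_rtranclE intro: converse_rtrancl_into_rtrancl)
    moreover have "finite (S\<^sup>* `` {z})" if "z \<in> S `` {y}" for z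
      using that dec by (blast intro: less)
    ultimately show ?case using branch by simp
  qed
  moreover have "S\<^sup>* `` Y = (\<Union>y\<in>Y. S\<^sup>* `` {y})" by blast
  ultimately show ?thesis using Y by simp
qed

section \<open>The grounded extension\<close>

definition defended :: "'a set \<Rightarrow> ('a \<Rightarrow> 'a \<Rightarrow> bool) \<Rightarrow> 'a set \<Rightarrow> 'a set" where
  "defended F att S = {a \<in> F. defends att S a}"

lemma mono_defended: "mono (defended F att)"
  unfolding defended_def defends_def by (rule monoI) blast

lemma grounded_eq_fixp: "grounded F att = ccpo_class.fixp (defended F att)"
proof
  show "grounded F att \<subseteq> ccpo_class.fixp (defended F att)"
  proof
    fix a assume "a \<in> grounded F att"
    then show "a \<in> ccpo_class.fixp (defended F att)"
    proof induction
      case (1 a)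
      then have "a \<in> defended F att (ccpo_class.fixp (defended F att))"
        unfolding defended_def defends_def by blast
      then show ?case by (subst fixp_unfold[OF mono_defended])
    qed
  qed
  have "defended F att (grounded F att) \<subseteq> grounded F att"
    unfolding defended_def defends_def by (blast intro: grounded.intros)
  then show "ccpo_class.fixp (defended F att) \<subseteq> grounded F att"
    by (rule fixp_lowerbound[OF mono_defended])
qed

lemma wf_precedes_defended: "wf (precedes (defended F att))"
  by (rule wf_precedes[OF mono_defended])

lemma trans_precedes_defended: "trans (precedes (defended F att))"
  by (rule trans_precedes[OF mono_defended])

lemma precedes_fst_grounded: "(c, h) \<in> precedes (defended F att) \<Longrightarrow> c \<in> grounded F att"
  unfolding grounded_eq_fixp by (rule precedes_fst_in_fixp[OF mono_defended])

lemma grounded_defended_by_predecessor: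
  assumes "h \<in> grounded F att" "att b h"
  shows "\<exists>c. (c, h) \<in> precedes (defended F att) \<and> att c b"
proof -
  obtain S where S: "S \<in> ccpo_class.iterates (defended F att)" "h \<notin> S" "h \<in> defended F att S"
    using iterates_entry_stage[OF mono_defended, of "{h}"] assms(1) unfolding grounded_eq_fixp by blast
  then obtain c where "c \<in> S" "att c b" using assms(2) unfolding defended_def defends_def by blast
  with S show ?thesis unfolding precedes_def by blast
qed

lemma grounded_subset: "grounded F att \<subseteq> F"
  by (auto elim: grounded.cases)

lemma conflict_free_grounded: "conflict_free att (grounded F att)"
proof -
  have "\<not> att a b" if "a \<in> grounded F att" "b \<in> grounded F att" for a b
    using that
  proof (induction arbitrary: b)
    case (1 a)
    show ?case
    proof
      assume "att a b"
      then obtain c' where "c' \<in> grounded F att" "att c' a"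
        using \<open>b \<in> grounded F att\<close> by (auto elim: grounded.cases)
      then show False using "1" by blast
    qed
  qed
  then show ?thesis unfolding conflict_free_def by blast
qed

lemma grounded_defence_closure:
  assumes B: "finite B" and Y: "finite Y" "Y \<subseteq> L" and L: "L \<subseteq> grounded F att"
    and down: "(precedes (defended F att))\<inverse> `` L \<subseteq> L"
  obtains Z where "Y \<subseteq> Z" "Z \<subseteq> L" "finite Z"
    "\<forall>z\<in>Z. \<forall>b\<in>B. att b z \<longrightarrow> (\<exists>c\<in>Z. (c, z) \<in> precedes (defended F att) \<and> att c b)"
proof -
  define \<delta> where "\<delta> z b = (SOME c. (c, z) \<in> precedes (defended F att) \<and> att c b)" for z b
  have \<delta>: "(\<delta> z b, z) \<in> precedes (defended F att) \<and> att (\<delta> z b) b"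
    if "z \<in> grounded F att" "att b z" for z b
    unfolding \<delta>_def using grounded_defended_by_predecessor[OF that] by (rule someI_ex)
  define S where "S = {(z, \<delta> z b) | z b. z \<in> grounded F att \<and> b \<in> B \<and> att b z}"
  define Z where "Z = S\<^sup>* `` Y"
  have branching: "finite (S `` {z})" for z
  proof (rule finite_subset)
    show "S `` {z} \<subseteq> \<delta> z ` B" unfolding S_def by blast
  qed (use B in simp)
  have "converse S \<subseteq> precedes (defended F att)" unfolding S_def using \<delta> by fastforce
  with wf_precedes_defended have Z_finite: "finite Z"
    unfolding Z_def using branching Y(1) by (rule finite_rtrancl_Image_if_wf)
  have "S `` L \<subseteq> L" unfolding S_def using \<delta> down by fastforce
  then have "S\<^sup>* `` L = L" by (rule Image_closed_trancl)
  then have ZL: "Z \<subseteq> L" unfolding Z_def using Y(2) by (metis Image_mono order_refl)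
  have YZ: "Y \<subseteq> Z" unfolding Z_def by blast
  show thesis
  proof (rule that[OF YZ ZL Z_finite], intro ballI impI)
    fix z b assume z: "z \<in> Z" and b: "b \<in> B" "att b z"
    have "z \<in> grounded F att" using z ZL L by blast
    from \<delta>[OF this b(2)] have "(\<delta> z b, z) \<in> precedes (defended F att)" "att (\<delta> z b) b" by blast+
    moreover have "(z, \<delta> z b) \<in> S" unfolding S_def using \<open>z \<in> grounded F att\<close> b by blast
    then have "\<delta> z b \<in> Z" using z unfolding Z_def by (blast intro: rtrancl_into_rtrancl)
    ultimately show "\<exists>c\<in>Z. (c, z) \<in> precedes (defended F att) \<and> att c b" by blast
  qed
qed

lemma grounded_counter_move:
  assumes L: "L \<subseteq> grounded F att"
    and down: "(precedes (defended F att))\<inverse> `` L \<subseteq> L"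
    and safe: "\<forall>a\<in>A. \<forall>z\<in>L. \<not> att a z"
    and Y: "finite Y" "Y \<subseteq> L"
    and X: "finite (X - A)" "cogent att X Y"
    and l: "l \<in> Y" "x \<in> X" "att l x"
  obtains Z m x' where "Y \<subseteq> Z" "Z \<subseteq> L" "finite Z" "strictly_cogent att Z X"
    "m \<in> Z" "(m, l) \<in> precedes (defended F att)" "x' \<in> X" "att m x'"
proof -
  let ?P = "precedes (defended F att)"
  obtain Z where Z: "Y \<subseteq> Z" "Z \<subseteq> L" "finite Z"
    and closed: "\<forall>z\<in>Z. \<forall>b\<in>X - A. att b z \<longrightarrow> (\<exists>c\<in>Z. (c, z) \<in> ?P \<and> att c b)"
    using grounded_defence_closure[OF X(1) Y L down] by blast
  have defence: "\<exists>c\<in>Z. (c, z) \<in> ?P \<and> att c b" if "z \<in> Z" "b \<in> X" "att b z" for z b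
    using closed safe that Z(2) by blast
  have "conflict_free att Z"
    using conflict_free_grounded[of att F] Z(2) L unfolding conflict_free_def by blast
  with defence have Z_cogent: "cogent att Z X"
    unfolding cogent_def attacked_by_def by blast
  obtain b where b: "b \<in> X" "att b l"
    using X(2) l unfolding cogent_def attacked_by_def by blast
  define Q where "Q = {z \<in> Z. (z, l) \<in> ?P \<and> (\<exists>x\<in>X. att z x)}"
  obtain c where "c \<in> Z" "(c, l) \<in> ?P" "att c b"
    using defence[OF _ b] l(1) Z(1) by blast
  with b(1) have "c \<in> Q" unfolding Q_def by blast
  then obtain m where m: "m \<in> Q" and min: "\<And>y. (y, m) \<in> ?P \<Longrightarrow> y \<notin> Q"
    using wfE_min[OF wf_precedes_defended[of F att]] by blast
  have m_unattacked: "\<not> att x m" if x: "x \<in> X" for x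
  proof
    assume "att x m"
    then obtain c where c: "c \<in> Z" "(c, m) \<in> ?P" "att c x"
      using defence x m unfolding Q_def by blast
    then have "(c, l) \<in> ?P"
      using m trans_precedes_defended[of F att] unfolding Q_def by (blast dest: transD)
    with c x have "c \<in> Q" unfolding Q_def by blast
    with min c(2) show False by blast
  qed
  then have "\<not> cogent att X Z"
    using m unfolding Q_def cogent_def attacked_by_def by blast
  with Z_cogent have "strictly_cogent att Z X" unfolding strictly_cogent_def by blast
  with Z m that show thesis unfolding Q_def by blast
qed

lemma least_grounded_attacker:
  assumes "g \<in> grounded F att" "a \<in> A" "att g a"
  obtains L g0 a0 where "L \<subseteq> grounded F att" "(precedes (defended F att))\<inverse> `` L \<subseteq> L"
    "\<forall>a\<in>A. \<forall>z\<in>L. \<not> att a z" "g0 \<in> L" "a0 \<in> A" "att g0 a0"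
proof -
  let ?P = "precedes (defended F att)"
  define B where "B = {g \<in> grounded F att. \<exists>a\<in>A. att g a}"
  have "g \<in> B" using assms unfolding B_def by blast
  then obtain g0 where "g0 \<in> B" and min: "\<And>y. (y, g0) \<in> ?P \<Longrightarrow> y \<notin> B"
    using wfE_min[OF wf_precedes_defended[of F att]] by blast
  then obtain a0 where g0: "g0 \<in> grounded F att" "a0 \<in> A" "att g0 a0"
    unfolding B_def by blast
  define L where "L = insert g0 (?P\<inverse> `` {g0})"
  have trans: "trans ?P" by (rule trans_precedes_defended)
  have L_grounded: "L \<subseteq> grounded F att"
    using g0(1) precedes_fst_grounded[of _ _ F att] unfolding L_def by blast
  have down: "?P\<inverse> `` L \<subseteq> L"
    using trans unfolding L_def by (blast dest: transD)
  have safe: "\<forall>a\<in>A. \<forall>z\<in>L. \<not> att a z"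
  proof (intro ballI notI)
    fix a z assume a: "a \<in> A" and z: "z \<in> L" "att a z"
    then obtain c where c: "(c, z) \<in> ?P" "att c a"
      using grounded_defended_by_predecessor[of z F att a] L_grounded by blast
    with z(1) trans have "(c, g0) \<in> ?P" unfolding L_def by (blast dest: transD)
    moreover have "c \<in> B" unfolding B_def using c a precedes_fst_grounded[of _ _ F att] by blast
    ultimately show False using min by blast
  qed
  have "g0 \<in> L" unfolding L_def by blast
  from L_grounded down safe this g0(2,3) show thesis by (rule that)
qed

section \<open>Tenability disputes\<close>

lemma dispute_snoc_iff:
  assumes "d \<noteq> []"
  shows "dispute F att (d @ [Z]) \<longleftrightarrow> dispute F att d \<and> Z \<subseteq> F \<and> conflict_free att Z \<and>
    (length d = 1 \<longrightarrow> finite Z) \<and>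
    (2 \<le> length d \<longrightarrow> d ! (length d - 2) \<subseteq> Z \<and> finite (Z - d ! (length d - 2))) \<and>
    cogent att Z (last d) \<and> (odd (length d) \<longrightarrow> strictly_cogent att Z (last d))"
proof -
  have pro_prev: "(\<forall>i. Suc (Suc i) = n \<longrightarrow> P i) \<longleftrightarrow> (2 \<le> n \<longrightarrow> P (n - 2))" for n P
    by (auto simp: le_iff_add)
  have prev: "(\<forall>i. Suc i = n \<longrightarrow> P i) \<longleftrightarrow> (0 < n \<longrightarrow> P (n - 1))" for n P
    by (auto simp: gr0_conv_Suc)
  have opp_move: "(\<forall>k. Suc (2 * k) = n \<longrightarrow> P (2 * k)) \<longleftrightarrow> (odd n \<longrightarrow> P (n - 1))" for n P
    by (auto elim!: oddE)
  show ?thesis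
    using assms unfolding dispute_def
    by (simp add: nth_append less_Suc_eq all_conj_distrib last_conv_nth pro_prev prev
        opp_move[where P = "\<lambda>i. strictly_cogent att Z (d ! i)"]) auto
qed

lemma follows_snoc_iff:
  "follows \<sigma> (d @ [Z]) \<longleftrightarrow> follows \<sigma> d \<and> (even (length d) \<and> d \<noteq> [] \<longrightarrow> Z = \<sigma> d)"
proof -
  have "follows \<sigma> (d @ [Z]) \<longleftrightarrow> follows \<sigma> d \<and> (\<forall>k. 0 < k \<and> 2 * k = length d \<longrightarrow> Z = \<sigma> d)"
    unfolding follows_def by (auto simp: nth_append less_Suc_eq)
  moreover have "(\<exists>k. 0 < k \<and> 2 * k = length d) \<longleftrightarrow> even (length d) \<and> length d \<noteq> 0"
    by presburger
  ultimately show ?thesis by auto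
qed

locale winning_strategy =
  fixes F :: "'a set" and att :: "'a \<Rightarrow> 'a \<Rightarrow> bool" and A :: "'a set"
    and \<sigma> :: "'a set list \<Rightarrow> 'a set"
  assumes initial: "dispute F att [A]"
    and reply: "\<And>d. dispute F att d \<Longrightarrow> hd d = A \<Longrightarrow> follows \<sigma> d \<Longrightarrow> even (length d) \<Longrightarrow>
      dispute F att (d @ [\<sigma> d])"

lemma tenableE:
  assumes "tenable F att A"
  obtains \<sigma> where "winning_strategy F att A \<sigma>"
  using assms unfolding tenable_def winning_strategy_def by blast

context winning_strategy
begin

lemma reply_legality:
  assumes "dispute F att d" "hd d = A" "follows \<sigma> d" "even (length d)"
  shows "cogent att (\<sigma> d) (last d)" "d ! (length d - 2) \<subseteq> \<sigma> d"
    "finite (\<sigma> d - d ! (length d - 2))"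
proof -
  have "d \<noteq> []" using assms(1) unfolding dispute_def by blast
  then have "length d \<noteq> 0" by simp
  with assms(4) have "2 \<le> length d" by presburger
  with dispute_snoc_iff[OF \<open>d \<noteq> []\<close>] reply[OF assms]
  show "cogent att (\<sigma> d) (last d)" "d ! (length d - 2) \<subseteq> \<sigma> d"
    "finite (\<sigma> d - d ! (length d - 2))" by auto
qed

text \<open>Here d ! (length d - 2) is Pro's previous move; that it adds only finitely many
  arguments to A is what keeps Opp's closures finite.\<close>

definition opponent_position :: "'a set \<Rightarrow> 'a set list \<Rightarrow> bool" where
  "opponent_position L d \<longleftrightarrow> dispute F att d \<and> hd d = A \<and> follows \<sigma> d \<and> even (length d) \<and>
     last d \<subseteq> L \<and> finite (last d) \<and> finite (d ! (length d - 2) - A)"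

lemma opponent_position_reply_finite:
  assumes "opponent_position L d"
  shows "finite (\<sigma> d - A)"
proof (rule finite_subset)
  show "\<sigma> d - A \<subseteq> (\<sigma> d - d ! (length d - 2)) \<union> (d ! (length d - 2) - A)" by blast
  show "finite ((\<sigma> d - d ! (length d - 2)) \<union> (d ! (length d - 2) - A))"
    using assms reply_legality(3) unfolding opponent_position_def by blast
qed

lemma opponent_position_initial:
  assumes "g0 \<in> L" "L \<subseteq> grounded F att" "\<forall>a\<in>A. \<forall>z\<in>L. \<not> att a z" "a0 \<in> A" "att g0 a0"
  shows "opponent_position L [A, {g0}]"
proof -
  have g0: "g0 \<in> grounded F att" and unattacked: "\<forall>a\<in>A. \<not> att a g0" using assms(1-3) by blast+
  have "dispute F att ([A] @ [{g0}])"
  proof (subst dispute_snoc_iff, simp_all, intro conjI)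
    show "dispute F att [A]" by (rule initial)
    show "g0 \<in> F" using g0 grounded_subset[of F att] by blast
    show cf: "conflict_free att {g0}"
      using g0 conflict_free_grounded[of att F] unfolding conflict_free_def by blast
    with unattacked show "cogent att {g0} A" unfolding cogent_def by blast
    moreover have "\<not> cogent att A {g0}"
      using unattacked assms(4,5) unfolding cogent_def attacked_by_def by blast
    ultimately show "strictly_cogent att {g0} A" unfolding strictly_cogent_def by blast
  qed
  moreover have "follows \<sigma> [A, {g0}]" unfolding follows_def by auto
  ultimately show ?thesis unfolding opponent_position_def using assms(1) by simp
qed

lemma opponent_position_extend:
  assumes d: "opponent_position L d"
    and Z: "Z \<subseteq> F" "Z \<subseteq> L" "finite Z" "last d \<subseteq> Z" "strictly_cogent att Z (\<sigma> d)"
  shows "opponent_position L (d @ [\<sigma> d, Z])"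
proof -
  let ?X = "\<sigma> d"
  have d_props: "dispute F att d" "hd d = A" "follows \<sigma> d" "even (length d)"
    using d unfolding opponent_position_def by blast+
  have "d \<noteq> []" using d_props(1) unfolding dispute_def by blast
  then have "length d \<noteq> 0" by simp
  with d_props(4) have len: "2 \<le> length d" by presburger
  have "dispute F att (d @ [?X])" using reply[OF d_props] .
  moreover have "(d @ [?X]) ! (length (d @ [?X]) - 2) = last d"
    using \<open>d \<noteq> []\<close> by (simp add: nth_append last_conv_nth)
  moreover have "conflict_free att Z" "cogent att Z ?X"
    using Z(5) unfolding strictly_cogent_def cogent_def by blast+
  ultimately have disp: "dispute F att ((d @ [?X]) @ [Z])"
    using dispute_snoc_iff[of "d @ [?X]"] Z len d_props(4) by auto
  have "follows \<sigma> (d @ [?X])"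
    using d_props(3) by (simp add: follows_snoc_iff)
  then have fol: "follows \<sigma> ((d @ [?X]) @ [Z])"
    unfolding follows_snoc_iff[of \<sigma> "d @ [?X]"] using d_props(4) by simp
  show ?thesis
    unfolding opponent_position_def
  proof (intro conjI)
    show "dispute F att (d @ [?X, Z])" using disp by simp
    show "follows \<sigma> (d @ [?X, Z])" using fol by simp
    show "hd (d @ [?X, Z]) = A" using d_props(2) \<open>d \<noteq> []\<close> by simp
    show "even (length (d @ [?X, Z]))" using d_props(4) by simp
    show "last (d @ [?X, Z]) \<subseteq> L" "finite (last (d @ [?X, Z]))" using Z(2,3) by simp_all
    show "finite ((d @ [?X, Z]) ! (length (d @ [?X, Z]) - 2) - A)"
      using opponent_position_reply_finite[OF d] by (simp add: nth_append)
  qed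
qed

lemma opponent_position_reply_unattacked:
  assumes L: "L \<subseteq> grounded F att"
    and down: "(precedes (defended F att))\<inverse> `` L \<subseteq> L"
    and safe: "\<forall>a\<in>A. \<forall>z\<in>L. \<not> att a z"
  shows "opponent_position L d \<Longrightarrow> l \<in> last d \<Longrightarrow> x \<in> \<sigma> d \<Longrightarrow> \<not> att l x"
  using wf_precedes_defended[of F att]
proof (induction l arbitrary: d x rule: wf_induct_rule)
  case (less l)
  let ?X = "\<sigma> d"
  have d_props: "dispute F att d" "hd d = A" "follows \<sigma> d" "even (length d)"
    and Y: "last d \<subseteq> L" "finite (last d)"
    using less.prems(1) unfolding opponent_position_def by blast+
  show "\<not> att l x"
  proof
    assume "att l x"
    then obtain Z m x' where Z: "last d \<subseteq> Z" "Z \<subseteq> L" "finite Z" "strictly_cogent att Z ?X"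
      and m: "m \<in> Z" "(m, l) \<in> precedes (defended F att)" "x' \<in> ?X" "att m x'"
      using grounded_counter_move[OF L down safe Y(2,1) opponent_position_reply_finite[OF less.prems(1)]
          reply_legality(1)[OF d_props] less.prems(2,3)] by blast
    have "Z \<subseteq> F" using Z(2) L grounded_subset[of F att] by blast
    then have next_position: "opponent_position L (d @ [?X, Z])"
      using opponent_position_extend[OF less.prems(1) _ Z(2,3,1,4)] by blast
    then have "(d @ [?X, Z]) ! (length (d @ [?X, Z]) - 2) \<subseteq> \<sigma> (d @ [?X, Z])"
      unfolding opponent_position_def using reply_legality(2) by blast
    then have "?X \<subseteq> \<sigma> (d @ [?X, Z])" by (simp add: nth_append)
    moreover have "m \<in> last (d @ [?X, Z])" using m(1) by simp
    ultimately show False using less.IH[OF m(2) next_position] m(3,4) by blast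
  qed
qed

lemma grounded_not_attacks_initial:
  assumes "g \<in> grounded F att" "a \<in> A"
  shows "\<not> att g a"
proof
  assume "att g a"
  with assms obtain L g0 a0 where L: "L \<subseteq> grounded F att" "(precedes (defended F att))\<inverse> `` L \<subseteq> L"
    "\<forall>a\<in>A. \<forall>z\<in>L. \<not> att a z" and g0: "g0 \<in> L" "a0 \<in> A" "att g0 a0"
    by (rule least_grounded_attacker)
  have position: "opponent_position L [A, {g0}]"
    using opponent_position_initial[OF g0(1) L(1,3) g0(2,3)] .
  then have "A \<subseteq> \<sigma> [A, {g0}]"
    using reply_legality(2) unfolding opponent_position_def by fastforce
  with opponent_position_reply_unattacked[OF L position] g0(2,3) show False by auto
qed

lemma conflict_free_initial_Un_grounded: "conflict_free att (A \<union> grounded F att)"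
proof -
  have "conflict_free att A" using initial unfolding dispute_def by simp
  moreover have "\<not> att a h" if "a \<in> A" "h \<in> grounded F att" for a h
    using that grounded_not_attacks_initial by (auto elim: grounded.cases)
  ultimately show ?thesis
    using conflict_free_grounded[of att F] grounded_not_attacks_initial
    unfolding conflict_free_def by blast
qed

end

theorem mainTheorem4:
  fixes F :: "'a set" and att :: "'a \<Rightarrow> 'a \<Rightarrow> bool" and A :: "'a set"
  assumes "\<forall>x y. att x y \<longrightarrow> x \<in> F \<and> y \<in> F"
    and "A \<subseteq> F"
    and "tenable F att A"
  shows "conflict_free att (A \<union> grounded F att)"
proof -
  obtain \<sigma> where "winning_strategy F att A \<sigma>"
    using assms(3) by (rule tenableE)
  then show ?thesis by (rule winning_strategy.conflict_free_initial_Un_grounded)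
qed

end
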